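(* Let $\widehat{A}=A+\epsilon B$ and $\widehat{C}=C+\epsilon D$ with $A,B,C,D\in\mathbb{R}^{n\times n}$ be such that the dual Moore-Penrose generalized inverses of $\widehat{A}$, $\widehat{C}$ and $\widehat{A}\widehat{C}$ exist and have the particular form $\widehat{A}^{\dagger}=A^{\dagger}-\epsilon A^{\dagger}BA^{\dagger}$, $\widehat{C}^{\dagger}=C^{\dagger}-\epsilon C^{\dagger}DC^{\dagger}$, $(\widehat{A}\widehat{C})^{\dagger}=(AC)^{\dagger}-\epsilon (AC)^{\dagger}(AD+BC)(AC)^{\dagger}$. If $AC=CA$, $A^*C=CA^*$, $C^{\dagger}B=BC^{\dagger}$ and $A^{\dagger}D=DA^{\dagger}$, then $(\widehat{A}\widehat{C})^{\dagger}=\widehat{A}^{\dagger}\widehat{C}^{\dagger}=\widehat{C}^{\dagger}\widehat{A}^{\dagger}$.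
   Context: A dual number is $a+\epsilon b$ with $a,b\in\mathbb{R}$, where $\epsilon\neq 0$, $\epsilon^2=0$ and $\epsilon$ commutes with reals. A dual matrix is $A+\epsilon B$ with $A,B$ real; sums and products are computed formally using $\epsilon^2=0$, transposition is $(A+\epsilon B)^T=A^T+\epsilon B^T$, and equality means equality of real and dual parts. $A^\dagger$ is the Moore-Penrose inverse and $A^*$ the (conjugate) transpose of a real matrix $A$. The dual Moore-Penrose generalized inverse (DMPGI) $\widehat{A}^\dagger$ of a dual matrix $\widehat{A}$ is the unique dual matrix $\widehat{X}$ (if it exists) with $\widehat{A}\widehat{X}\widehat{A}=\widehat{A}$, $\widehat{X}\widehat{A}\widehat{X}=\widehat{X}$, $(\widehat{A}\widehat{X})^T=\widehat{A}\widehat{X}$, $(\widehat{X}\widehat{A})^T=\widehat{X}\widehat{A}$. *)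

theory Defs
  imports "HOL-Analysis.Analysis"
begin

definition is_MP :: "real^('n::finite)^'n \<Rightarrow> real^'n^'n \<Rightarrow> bool" where
  "is_MP A X \<longleftrightarrow> A ** X ** A = A \<and> X ** A ** X = X \<and>
     transpose (A ** X) = A ** X \<and> transpose (X ** A) = X ** A"

definition mp_inv :: "real^('n::finite)^'n \<Rightarrow> real^'n^'n" where
  "mp_inv A = (THE X. is_MP A X)"

text \<open>Dual matrices A + eps B as pairs (A, B) of real matrices.\<close>
type_synonym 'n dmat = "(real^'n^'n) \<times> (real^'n^'n)"

definition dmult :: "('n::finite) dmat \<Rightarrow> 'n dmat \<Rightarrow> 'n dmat" where
  "dmult P Q = (fst P ** fst Q, fst P ** snd Q + snd P ** fst Q)"

definition dtrans :: "('n::finite) dmat \<Rightarrow> 'n dmat" where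
  "dtrans P = (transpose (fst P), transpose (snd P))"

definition is_DMPGI :: "('n::finite) dmat \<Rightarrow> 'n dmat \<Rightarrow> bool" where
  "is_DMPGI A X \<longleftrightarrow> dmult (dmult A X) A = A \<and> dmult (dmult X A) X = X \<and>
     dtrans (dmult A X) = dmult A X \<and> dtrans (dmult X A) = dmult X A"

definition dmpgi :: "('n::finite) dmat \<Rightarrow> 'n dmat" where
  "dmpgi A = (THE X. is_DMPGI A X)"

end

theory Submission
  imports Defs
begin

(*
  The real part of a dual Moore-Penrose inverse is a Moore-Penrose inverse, so everything
  reduces to commutation relations. A matrix commuting with A and A\<^sup>T commutes with
  A\<^sup>\<dagger>; applied four times this makes A, C, A\<^sup>\<dagger>, C\<^sup>\<dagger>
  pairwise commute, hence (AC)\<^sup>\<dagger> = A\<^sup>\<dagger>C\<^sup>\<dagger>. The dual parts then agree by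
  direct computation, using that C\<^sup>\<dagger> commutes with B and A\<^sup>\<dagger> with D.
*)

lemma matrix_add_rdistrib: "((A::real^'n^'m) + B) ** (C::real^'k^'n) = A ** C + B ** C"
  by (vector matrix_matrix_mult_def sum.distrib[symmetric] field_simps)

lemma matrix_mul_lneg: "(- (A::real^'n^'m)) ** (C::real^'k^'n) = - (A ** C)"
  by (vector matrix_matrix_mult_def sum_negf[symmetric])

lemma matrix_mul_rneg: "(A::real^'n^'m) ** (- (C::real^'k^'n)) = - (A ** C)"
  by (vector matrix_matrix_mult_def sum_negf[symmetric])

lemma transpose_commute:
  "X ** Y = Y ** (X::real^'n^'n) \<Longrightarrow> transpose X ** transpose Y = transpose Y ** transpose X"
  by (metis matrix_transpose_mul)

lemma is_MP_unique:
  fixes A X Y :: "real^'n^'n"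
  assumes X: "is_MP A X" and Y: "is_MP A Y"
  shows "X = Y"
proof -
  have x1: "A ** X ** A = A" and x2: "X ** A ** X = X" and x3: "transpose (A ** X) = A ** X"
    and x4: "transpose (X ** A) = X ** A" using X by (auto simp: is_MP_def)
  have y1: "A ** Y ** A = A" and y2: "Y ** A ** Y = Y" and y3: "transpose (A ** Y) = A ** Y"
    and y4: "transpose (Y ** A) = Y ** A" using Y by (auto simp: is_MP_def)
  have "X = X ** (A ** X)" using x2 by (simp add: matrix_mul_assoc)
  also have "\<dots> = X ** transpose X ** transpose (A ** Y ** A)"
    using x3 y1 by (metis matrix_mul_assoc matrix_transpose_mul)
  also have "\<dots> = X ** transpose (A ** X) ** transpose (A ** Y)"
    by (simp add: matrix_transpose_mul matrix_mul_assoc)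
  also have "\<dots> = X ** A ** Y" using x2 x3 y3 by (simp add: matrix_mul_assoc)
  finally have X_eq: "X = X ** A ** Y" .
  have "Y = Y ** A ** Y" using y2 by simp
  also have "\<dots> = transpose (A ** X ** A) ** transpose Y ** Y"
    using x1 y4 by (metis matrix_transpose_mul)
  also have "\<dots> = transpose (X ** A) ** transpose (Y ** A) ** Y"
    by (simp add: matrix_transpose_mul matrix_mul_assoc)
  also have "\<dots> = X ** A ** Y" using x4 y2 y4 by (metis matrix_mul_assoc)
  finally show ?thesis using X_eq by simp
qed

lemma mp_inv_eqI: "is_MP A X \<Longrightarrow> mp_inv A = X"
  unfolding mp_inv_def using is_MP_unique by blast

lemma is_DMPGI_fst_is_MP: "is_DMPGI (A, B) X \<Longrightarrow> is_MP A (fst X)"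
  by (cases X) (simp add: is_DMPGI_def is_MP_def dmult_def dtrans_def)

lemma is_DMPGI_imp_is_MP_mp_inv: "\<exists>X. is_DMPGI (A, B) X \<Longrightarrow> is_MP A (mp_inv A)"
  using is_DMPGI_fst_is_MP mp_inv_eqI by metis

(* The two factorisations P = P P\<^sup>T A\<^sup>T and P = A\<^sup>T P\<^sup>T P let X pass
   through P, giving P X = P X A P and X P = P A X P; the right-hand sides agree as X A = A X. *)
lemma is_MP_commute:
  fixes A X P :: "real^'n^'n"
  assumes P: "is_MP A P"
    and XA: "X ** A = A ** X" and XAt: "X ** transpose A = transpose A ** X"
  shows "X ** P = P ** X"
proof -
  have p1: "A ** P ** A = A" and p2: "P ** A ** P = P" and p3: "transpose (A ** P) = A ** P"
    and p4: "transpose (P ** A) = P ** A" using P by (auto simp: is_MP_def)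
  have P_right: "P = P ** transpose P ** transpose A"
    by (metis p2 p3 matrix_mul_assoc matrix_transpose_mul)
  have At_right: "transpose A ** A ** P = transpose A"
    by (metis p1 p3 matrix_mul_assoc matrix_transpose_mul)
  have P_left: "P = transpose A ** transpose P ** P"
    by (metis p2 p4 matrix_transpose_mul)
  have At_left: "P ** A ** transpose A = transpose A"
    by (metis p1 p4 matrix_mul_assoc matrix_transpose_mul)
  have "P ** X ** A ** P = P ** transpose P ** (transpose A ** X) ** A ** P"
    using P_right by (metis matrix_mul_assoc)
  also have "\<dots> = P ** transpose P ** X ** (transpose A ** A ** P)"
    using XAt by (metis matrix_mul_assoc)
  also have "\<dots> = P ** X" using P_right At_right XAt by (metis matrix_mul_assoc)
  finally have PX: "P ** X ** A ** P = P ** X" .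
  have "P ** A ** X ** P = P ** A ** (X ** transpose A) ** transpose P ** P"
    using P_left by (metis matrix_mul_assoc)
  also have "\<dots> = (P ** A ** transpose A) ** X ** transpose P ** P"
    using XAt by (simp add: matrix_mul_assoc)
  also have "\<dots> = X ** P" using P_left At_left XAt by (metis matrix_mul_assoc)
  finally have XP: "P ** A ** X ** P = X ** P" .
  show ?thesis using PX XP XA by (metis matrix_mul_assoc)
qed

lemma is_MP_mult_commuting:
  fixes A C P Q :: "real^'n^'n"
  assumes P: "is_MP A P" and Q: "is_MP C Q"
    and AC: "A ** C = C ** A" and PC: "P ** C = C ** P" and QA: "Q ** A = A ** Q"
    and PQ: "P ** Q = Q ** P"
  shows "is_MP (A ** C) (P ** Q)"
proof -
  have p1: "A ** P ** A = A" and p2: "P ** A ** P = P" and p3: "transpose (A ** P) = A ** P"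
    and p4: "transpose (P ** A) = P ** A" using P by (auto simp: is_MP_def)
  have q1: "C ** Q ** C = C" and q2: "Q ** C ** Q = Q" and q3: "transpose (C ** Q) = C ** Q"
    and q4: "transpose (Q ** C) = Q ** C" using Q by (auto simp: is_MP_def)
  have ACPQ: "A ** C ** (P ** Q) = A ** P ** (C ** Q)"
    using PC by (metis matrix_mul_assoc)
  have PQAC: "P ** Q ** (A ** C) = P ** A ** (Q ** C)"
    using QA by (metis matrix_mul_assoc)
  have "transpose (A ** P ** (C ** Q)) = A ** P ** (C ** Q)"
    using AC PC QA PQ p3 q3 by (metis matrix_transpose_mul matrix_mul_assoc)
  moreover have "transpose (P ** A ** (Q ** C)) = P ** A ** (Q ** C)"
    using AC PC QA PQ p4 q4 by (metis matrix_transpose_mul matrix_mul_assoc)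
  moreover have "A ** P ** (C ** Q) ** (A ** C) = A ** C"
    using AC QA p1 q1 by (metis matrix_mul_assoc)
  moreover have "P ** A ** (Q ** C) ** (P ** Q) = P ** Q"
    using PC PQ p2 q2 by (metis matrix_mul_assoc)
  ultimately show ?thesis
    unfolding is_MP_def ACPQ PQAC by simp
qed

(* The form A\<^sup>\<dagger> - \<epsilon> A\<^sup>\<dagger>BA\<^sup>\<dagger> of the dual inverse of A + \<epsilon>B, with P for A\<^sup>\<dagger>. *)
definition dual_mp_form :: "real^('n::finite)^'n \<Rightarrow> real^'n^'n \<Rightarrow> 'n dmat" where
  "dual_mp_form P B = (P, - (P ** B ** P))"

lemma dmult_dual_mp_form:
  fixes A B C D P Q :: "real^'n^'n"
  assumes PAP: "P ** A ** P = P" and QCQ: "Q ** C ** Q = Q"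
    and PQ: "P ** Q = Q ** P" and PC: "P ** C = C ** P" and QA: "Q ** A = A ** Q"
    and QB: "Q ** B = B ** Q" and PD: "P ** D = D ** P"
  shows "dmult (dual_mp_form P B) (dual_mp_form Q D) = dual_mp_form (P ** Q) (A ** D + B ** C)"
proof -
  have "P ** Q ** (A ** D) ** (P ** Q) = P ** A ** Q ** P ** D ** Q"
    using QA PD by (metis matrix_mul_assoc)
  also have "\<dots> = P ** A ** P ** (Q ** D ** Q)"
    using PQ by (metis matrix_mul_assoc)
  finally have AD: "P ** Q ** (A ** D) ** (P ** Q) = P ** (Q ** D ** Q)"
    using PAP by simp
  have "P ** Q ** (B ** C) ** (P ** Q) = P ** B ** Q ** P ** C ** Q"
    using QB PC by (metis matrix_mul_assoc)
  also have "\<dots> = P ** B ** P ** (Q ** C ** Q)"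
    using PQ by (metis matrix_mul_assoc)
  finally have BC: "P ** Q ** (B ** C) ** (P ** Q) = P ** B ** P ** Q"
    using QCQ by simp
  show ?thesis
    by (simp add: dual_mp_form_def dmult_def AD BC matrix_add_ldistrib matrix_add_rdistrib
        matrix_mul_lneg matrix_mul_rneg)
qed

lemma dmult_dual_mp_form_commute:
  fixes B D P Q :: "real^'n^'n"
  assumes PQ: "P ** Q = Q ** P" and QB: "Q ** B = B ** Q" and PD: "P ** D = D ** P"
  shows "dmult (dual_mp_form P B) (dual_mp_form Q D) = dmult (dual_mp_form Q D) (dual_mp_form P B)"
proof -
  have "P ** (Q ** D ** Q) = Q ** D ** Q ** P"
    using PQ PD by (metis matrix_mul_assoc)
  moreover have "P ** B ** P ** Q = Q ** (P ** B ** P)"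
    using PQ QB by (metis matrix_mul_assoc)
  ultimately show ?thesis
    using PQ by (simp add: dual_mp_form_def dmult_def matrix_mul_lneg matrix_mul_rneg)
qed

theorem mainTheorem8:
  fixes A B C D :: "real^'n^'n"
  assumes exA: "\<exists>X. is_DMPGI (A, B) X"
    and exC: "\<exists>X. is_DMPGI (C, D) X"
    and exAC: "\<exists>X. is_DMPGI (dmult (A, B) (C, D)) X"
    and formA: "dmpgi (A, B) = (mp_inv A, - (mp_inv A ** B ** mp_inv A))"
    and formC: "dmpgi (C, D) = (mp_inv C, - (mp_inv C ** D ** mp_inv C))"
    and formAC: "dmpgi (dmult (A, B) (C, D)) =
       (mp_inv (A ** C), - (mp_inv (A ** C) ** (A ** D + B ** C) ** mp_inv (A ** C)))"
    and comm1: "A ** C = C ** A"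
    and comm2: "transpose A ** C = C ** transpose A"
    and comm3: "mp_inv C ** B = B ** mp_inv C"
    and comm4: "mp_inv A ** D = D ** mp_inv A"
  shows "dmpgi (dmult (A, B) (C, D)) = dmult (dmpgi (A, B)) (dmpgi (C, D)) \<and>
         dmult (dmpgi (A, B)) (dmpgi (C, D)) = dmult (dmpgi (C, D)) (dmpgi (A, B))"
proof -
  define P Q where "P = mp_inv A" and "Q = mp_inv C"
  have P: "is_MP A P" and Q: "is_MP C Q"
    using exA exC is_DMPGI_imp_is_MP_mp_inv unfolding P_def Q_def by blast+
  have ACt: "A ** transpose C = transpose C ** A"
    using transpose_commute[OF comm2] by simp
  have PC: "P ** C = C ** P" using is_MP_commute[OF P] comm1 comm2 by metis
  have QA: "Q ** A = A ** Q" using is_MP_commute[OF Q] comm1 ACt by metis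
  have PCt: "P ** transpose C = transpose C ** P"
    using is_MP_commute[OF P] ACt transpose_commute[OF comm1] by metis
  have PQ: "P ** Q = Q ** P" using is_MP_commute[OF Q] PC PCt by metis
  have QB: "Q ** B = B ** Q" and PD: "P ** D = D ** P"
    using comm3 comm4 unfolding P_def Q_def .
  have "mp_inv (A ** C) = P ** Q"
    using mp_inv_eqI is_MP_mult_commuting[OF P Q comm1 PC QA PQ] by blast
  then have "dmpgi (dmult (A, B) (C, D)) = dual_mp_form (P ** Q) (A ** D + B ** C)"
    using formAC by (simp only: dual_mp_form_def)
  moreover have "dmpgi (A, B) = dual_mp_form P B" and "dmpgi (C, D) = dual_mp_form Q D"
    using formA formC by (simp_all only: P_def Q_def dual_mp_form_def)
  moreover have "P ** A ** P = P" and "Q ** C ** Q = Q"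
    using P Q by (simp_all add: is_MP_def)
  ultimately show ?thesis
    using dmult_dual_mp_form PQ PC QA QB PD dmult_dual_mp_form_commute[OF PQ QB PD] by metis
qed

end
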